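(* If $x$ is regular for the sequence $n_j$ then \[ \lim_{j\to\infty}\frac{D_{n_j}(x)}{n_j}=L\in\overline{\mathbb{R}} \] if and only if \[ \lim_{j\to\infty}(-1)^{\iota_{n_j}(x)}=\operatorname{sign}(L),\qquad |L|\ge\frac\pi2,\qquad\lim_{j\to\infty}\rho_{n_j}(x)^2=A^{-1}(|L|). \]
   Context: Nodes: $x_{k,n}:=2k/n-1$, $k=0,\dots,n$; $D_n(x)=\sum_{k=0}^n(-1)^k\frac{1}{x-x_{k,n}}$. $\iota_n(x):=\lfloor n(x+1)/2\rfloor$, $\rho_n(x):=n(x-x_{\iota_n(x),n})-1$. $\overline{\mathbb{R}}=\mathbb{R}\cup\{\pm\infty\}$ is the two-point compactification of $\mathbb{R}$. $A(y)=\sum_{k=0}^\infty(-1)^k\frac{4k+2}{(2k+1)^2-y}$ for $y\in[0,1)$, extended by $A(1)=+\infty$; this is an increasing homeomorphism $[0,1]\to[\pi/2,+\infty]$, and $A^{-1}$ denotes its inverse. A sequence $n_j$ is a strictly increasing map $\mathbb{N}\to\mathbb{N}$; $x\in[-1,1]$ is regular for $n_j$ if there is $j_0$ with $x\notin\{x_{0,n_j},\dots,x_{n_j,n_j}\}$ for all $j\ge j_0$. *)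

theory Defs
  imports "HOL-Analysis.Analysis"
begin

definition node :: "nat \<Rightarrow> nat \<Rightarrow> real" where
  "node k n = 2 * real k / real n - 1"

definition Dn :: "nat \<Rightarrow> real \<Rightarrow> real" where
  "Dn n x = (\<Sum>k = 0..n. (-1) ^ k / (x - node k n))"

text \<open>iota_n(x) = floor(n(x+1)/2) (nonnegative for x in [-1,1]).\<close>
definition iota :: "nat \<Rightarrow> real \<Rightarrow> nat" where
  "iota n x = nat \<lfloor>real n * (x + 1) / 2\<rfloor>"

definition rho :: "nat \<Rightarrow> real \<Rightarrow> real" where
  "rho n x = real n * (x - node (iota n x) n) - 1"

definition A_fun :: "real \<Rightarrow> ereal" where
  "A_fun y = (if y < 1
      then ereal (\<Sum>k. (-1) ^ k * (4 * real k + 2) / ((2 * real k + 1)\<^sup>2 - y))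
      else \<infinity>)"

definition A_inv :: "ereal \<Rightarrow> real" where
  "A_inv = the_inv_into {0..1} A_fun"

definition esign :: "ereal \<Rightarrow> real" where
  "esign L = (if L > 0 then 1 else if L < 0 then -1 else 0)"

definition regular_for :: "(nat \<Rightarrow> nat) \<Rightarrow> real \<Rightarrow> bool" where
  "regular_for nj x \<longleftrightarrow> (\<exists>j0. \<forall>j\<ge>j0. \<forall>k\<le>nj j. x \<noteq> node k (nj j))"

end

theory Submission
  imports Defs
begin

text \<open>
  Put \<open>t = n (x + 1) / 2 = i + f\<close> with \<open>i = \<iota>\<^sub>n(x)\<close> and \<open>0 < f < 1\<close>, so that
  \<open>\<rho>\<^sub>n(x) = 2f - 1\<close>. Splitting \<open>D\<^sub>n(x) / n\<close> at the node \<open>x\<^sub>i\<close> writes it as \<open>(-1)\<^sup>i / 2\<close> times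
  partial sums of the alternating series \<open>\<Sum>(-1)\<^sup>m / (f + m)\<close> and \<open>\<Sum>(-1)\<^sup>m / (1 - f + m)\<close>.
  The full series add up to \<open>2 A(\<rho>\<^sup>2)\<close> and the truncation errors are \<open>O(1 / n)\<close> for fixed
  \<open>x \<in> (-1, 1)\<close>, so \<open>D\<^sub>n(x) / n = (-1)\<^sup>\<iota> A(\<rho>\<^sup>2) + o(1)\<close>. The theorem then follows from two
  facts: a product of signs \<open>\<plusminus>1\<close> and moduli \<open>\<ge> \<pi>/2\<close> converges in the extended reals iff
  the signs and the moduli converge; and \<open>A\<close> is an increasing homeomorphism
  \<open>[0, 1] \<rightarrow> [\<pi>/2, \<infinity>]\<close>, because grouping its series in pairs gives positive terms that
  increase with \<open>y\<close>, \<open>A(0) = \<pi>/2\<close> is Leibniz's series for \<open>\<pi>\<close>, and \<open>A(y) \<ge> 2 / (1 - y) - 1\<close>.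
\<close>

section \<open>The series \<open>A\<close>\<close>

definition A_term :: "nat \<Rightarrow> real \<Rightarrow> real" where
  "A_term k y = (4 * real k + 2) / ((2 * real k + 1)\<^sup>2 - y)"

definition A_series :: "real \<Rightarrow> real" where
  "A_series y = (\<Sum>k. (-1) ^ k * A_term k y)"

lemma A_fun_eq_A_series: "y < 1 \<Longrightarrow> A_fun y = ereal (A_series y)"
  by (simp add: A_fun_def A_series_def A_term_def)

lemma divide_square_diff_strict_antimono:
  fixes a b y :: real
  assumes "0 \<le> y" "y < 1" "1 \<le> a" "a < b"
  shows "b / (b\<^sup>2 - y) < a / (a\<^sup>2 - y)"
proof -
  have "1 \<le> a\<^sup>2" "a\<^sup>2 < b\<^sup>2"
    using assms by (auto intro: one_le_power power_strict_mono)
  then have "a\<^sup>2 - y > 0" "b\<^sup>2 - y > 0"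
    using assms by linarith+
  moreover have "(b - a) * (a * b + y) > 0"
    using assms by (intro mult_pos_pos) (auto intro: add_pos_nonneg)
  ultimately show ?thesis
    by (simp add: divide_simps power2_eq_square algebra_simps)
qed

lemma divide_square_diff_increment_strict_antimono:
  fixes a b y1 y2 :: real
  assumes "0 \<le> y1" "y1 < y2" "y2 < 1" "1 \<le> a" "a < b"
  shows "b / (b\<^sup>2 - y2) - b / (b\<^sup>2 - y1) < a / (a\<^sup>2 - y2) - a / (a\<^sup>2 - y1)"
proof -
  have "1 \<le> a\<^sup>2" "a\<^sup>2 < b\<^sup>2"
    using assms by (auto intro: one_le_power power_strict_mono)
  then have squares: "y2 < a\<^sup>2" "a\<^sup>2 < b\<^sup>2"
    using assms by linarith+
  have increment: "c / (c\<^sup>2 - y2) - c / (c\<^sup>2 - y1) = (y2 - y1) * (c / (c\<^sup>2 - y1) * (1 / (c\<^sup>2 - y2)))"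
    if "y2 < c\<^sup>2" for c :: real
    using that assms by (simp add: field_simps)
  \<comment> \<open>Both factors are positive and strictly decreasing in \<open>c \<ge> 1\<close>.\<close>
  have "b / (b\<^sup>2 - y1) * (1 / (b\<^sup>2 - y2)) < a / (a\<^sup>2 - y1) * (1 / (a\<^sup>2 - y2))"
  proof (rule mult_strict_mono)
    show "b / (b\<^sup>2 - y1) < a / (a\<^sup>2 - y1)"
      using assms by (intro divide_square_diff_strict_antimono) auto
    show "1 / (b\<^sup>2 - y2) < 1 / (a\<^sup>2 - y2)"
      using assms squares by (intro divide_strict_left_mono mult_pos_pos) linarith+
    show "0 < a / (a\<^sup>2 - y1)" "0 \<le> 1 / (b\<^sup>2 - y2)"
      using assms squares by auto
  qed
  then have "(y2 - y1) * (b / (b\<^sup>2 - y1) * (1 / (b\<^sup>2 - y2)))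
      < (y2 - y1) * (a / (a\<^sup>2 - y1) * (1 / (a\<^sup>2 - y2)))"
    using assms by (intro mult_strict_left_mono) auto
  then show ?thesis
    using increment[of a] increment[of b] squares by simp
qed

lemma A_term_eq: "A_term k y = 2 * ((2 * real k + 1) / ((2 * real k + 1)\<^sup>2 - y))"
  by (simp add: A_term_def algebra_simps)

lemma A_term_denominator_pos: "y < 1 \<Longrightarrow> 0 < (2 * real k + 1)\<^sup>2 - y"
  using one_le_power[of "2 * real k + 1" 2] by linarith

lemma A_term_pos: "y < 1 \<Longrightarrow> 0 < A_term k y"
  unfolding A_term_def using A_term_denominator_pos[of y k] by (intro divide_pos_pos) auto

lemma A_term_strict_antimono: "0 \<le> y \<Longrightarrow> y < 1 \<Longrightarrow> k < m \<Longrightarrow> A_term m y < A_term k y"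
  unfolding A_term_eq by (intro mult_strict_left_mono divide_square_diff_strict_antimono) auto

lemma A_term_tendsto_zero: "(\<lambda>k. A_term k y) \<longlonglongrightarrow> 0"
  unfolding A_term_def by real_asymp

lemma A_term_continuous_on: "d < 1 \<Longrightarrow> continuous_on {0..d} (A_term k)"
  unfolding A_term_def
  by (intro continuous_intros)
     (metis A_term_denominator_pos atLeastAtMost_iff le_less_trans less_irrefl)

definition A_pair :: "nat \<Rightarrow> real \<Rightarrow> real" where
  "A_pair k y = A_term (2 * k) y - A_term (2 * k + 1) y"

lemma A_series_sums:
  assumes "0 \<le> y" "y < 1"
  shows "(\<lambda>k. (-1) ^ k * A_term k y) sums A_series y"
proof -
  have "summable (\<lambda>k. (-1) ^ k * A_term k y)"
    using assms A_term_tendsto_zero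
    by (intro summable_Leibniz'(1)) (auto intro: less_imp_le A_term_pos A_term_strict_antimono)
  then show ?thesis
    by (simp add: A_series_def summable_sums)
qed

lemma A_pair_sums: assumes "0 \<le> y" "y < 1" shows "(\<lambda>k. A_pair k y) sums A_series y"
  using sums_group[OF A_series_sums[OF assms], of 2] by (simp add: A_pair_def mult.commute)

lemma A_pair_pos: "0 \<le> y \<Longrightarrow> y < 1 \<Longrightarrow> 0 < A_pair k y"
  unfolding A_pair_def by (simp add: A_term_strict_antimono)

lemma A_pair_strict_mono:
  assumes "0 \<le> y1" "y1 < y2" "y2 < 1"
  shows "A_pair k y1 < A_pair k y2"
proof -
  have "2 * real (2 * k + 1) + 1 > 2 * real (2 * k) + 1"
    by simp
  from divide_square_diff_increment_strict_antimono[OF assms _ this]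
  show ?thesis
    unfolding A_pair_def A_term_eq by linarith
qed

lemma A_series_strict_mono:
  assumes "0 \<le> y1" "y1 < y2" "y2 < 1"
  shows "A_series y1 < A_series y2"
proof -
  have sums: "(\<lambda>k. A_pair k y2 - A_pair k y1) sums (A_series y2 - A_series y1)"
    using assms by (intro sums_diff A_pair_sums) auto
  have "0 < (\<Sum>k. A_pair k y2 - A_pair k y1)"
    using sums_summable[OF sums] A_pair_strict_mono[OF assms] by (intro suminf_pos) auto
  also have "\<dots> = A_series y2 - A_series y1"
    using sums by (rule sums_unique[symmetric])
  finally show ?thesis by simp
qed

lemma A_series_zero: "A_series 0 = pi / 2"
proof -
  have series: "arctan 1 = (\<Sum>k. (-1) ^ k * (1 / real (k * 2 + 1) * 1 ^ (k * 2 + 1)))"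
    by (rule arctan_series) simp
  have "summable (\<lambda>k. (-1) ^ k * (1 / real (k * 2 + 1) * 1 ^ (k * 2 + 1)))"
    by (rule summable_arctan_series) simp
  then have "(\<lambda>k. (-1) ^ k * (1 / real (k * 2 + 1) * 1 ^ (k * 2 + 1))) sums (pi / 4)"
    unfolding arctan_one[symmetric] series by (rule summable_sums)
  then have "(\<lambda>k. 2 * ((-1) ^ k * (1 / real (k * 2 + 1)))) sums (2 * (pi / 4))"
    by (intro sums_mult) simp
  moreover have "A_term k 0 = 2 / real (k * 2 + 1)" for k
  proof -
    have "0 < 2 * real k + 1" by simp
    then show ?thesis unfolding A_term_eq by (simp add: power2_eq_square mult.commute)
  qed
  ultimately show ?thesis
    unfolding A_series_def by (simp add: sums_iff mult.commute)
qed

lemma A_series_ge_pi_half: "0 \<le> y \<Longrightarrow> y < 1 \<Longrightarrow> pi / 2 \<le> A_series y"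
  using A_series_strict_mono[of 0 y] by (cases "y = 0") (auto simp: A_series_zero)

lemma A_series_lower_bound: assumes "0 \<le> y" "y < 1" shows "2 / (1 - y) - 1 \<le> A_series y"
proof -
  have "A_pair 0 y \<le> A_series y"
    using sum_le_suminf[of "\<lambda>k. A_pair k y" "{0}"] A_pair_sums[OF assms] A_pair_pos[OF assms]
    by (simp add: sums_iff less_imp_le)
  moreover have "A_pair 0 y = 2 / (1 - y) - 6 / (9 - y)"
    by (simp add: A_pair_def A_term_def)
  moreover have "6 / (9 - y) \<le> 1"
    using assms by simp
  ultimately show ?thesis by linarith
qed

lemma A_series_continuous_on: assumes "d < 1" shows "continuous_on {0..d} A_series"
proof (cases "0 \<le> d")
  case True
  have "uniform_limit {0..d} (\<lambda>n y. \<Sum>k<n. A_pair k y) (\<lambda>y. \<Sum>k. A_pair k y) sequentially"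
  proof (rule Weierstrass_m_test)
    show "summable (\<lambda>k. A_pair k d)"
      using A_pair_sums[OF True assms] by (rule sums_summable)
    fix k y assume "y \<in> {0..d}"
    then show "norm (A_pair k y) \<le> A_pair k d"
      using assms A_pair_pos[of y k] A_pair_strict_mono[of y d k] by (cases "y = d") auto
  qed
  moreover have "continuous_on {0..d} (\<lambda>y. \<Sum>k<n. A_pair k y)" for n
    unfolding A_pair_def using assms by (intro continuous_on_sum continuous_on_diff A_term_continuous_on)
  ultimately have "continuous_on {0..d} (\<lambda>y. \<Sum>k. A_pair k y)"
    by (intro uniform_limit_theorem[where F=sequentially] always_eventually) auto
  moreover have "(\<Sum>k. A_pair k y) = A_series y" if "y \<in> {0..d}" for y
    using A_pair_sums[of y] that assms by (simp add: sums_iff)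
  ultimately show ?thesis by (rule continuous_on_eq)
qed simp

section \<open>\<open>A\<close> as a homeomorphism onto \<open>[\<pi>/2, \<infinity>]\<close>\<close>

lemma A_fun_one: "A_fun 1 = \<infinity>"
  by (simp add: A_fun_def)

lemma A_fun_zero: "A_fun 0 = ereal (pi / 2)"
  by (simp add: A_fun_eq_A_series A_series_zero)

lemma A_fun_strict_mono_on: "strict_mono_on {0..1} A_fun"
proof (rule strict_mono_onI)
  fix r s :: real
  assume "r \<in> {0..1}" "s \<in> {0..1}" "r < s"
  then show "A_fun r < A_fun s"
    by (cases "s = 1") (simp_all add: A_fun_one A_fun_eq_A_series A_series_strict_mono)
qed

lemma A_fun_inj_on: "inj_on A_fun {0..1}"
  using A_fun_strict_mono_on by (rule strict_mono_on_imp_inj_on)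

lemma A_fun_tendsto_infinity: "(A_fun \<longlongrightarrow> \<infinity>) (at 1 within {0..1})"
  unfolding tendsto_PInfty eventually_at
proof (intro allI exI conjI ballI impI)
  fix r :: real and y :: real
  show "0 < 2 / (\<bar>r\<bar> + 2)" by simp
  assume "y \<in> {0..1}" "y \<noteq> 1 \<and> dist y 1 < 2 / (\<bar>r\<bar> + 2)"
  then have y: "0 \<le> y" "y < 1" "(1 - y) * (\<bar>r\<bar> + 2) < 2"
    by (auto simp: dist_real_def field_simps)
  then have "\<bar>r\<bar> + 2 < 2 / (1 - y)"
    by (simp add: field_simps)
  then show "ereal r < A_fun y"
    using A_series_lower_bound[OF y(1,2)] y by (simp add: A_fun_eq_A_series)
qed

lemma A_fun_continuous_on: "continuous_on {0..1} A_fun"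
  unfolding continuous_on_eq_continuous_within
proof
  fix x :: real
  assume x: "x \<in> {0..1}"
  show "continuous (at x within {0..1}) A_fun"
  proof (cases "x = 1")
    case True
    then show ?thesis
      using A_fun_tendsto_infinity by (simp add: continuous_within A_fun_one)
  next
    case False
    define d where "d = (x + 1) / 2"
    have d: "x < d" "d < 1"
      using x False by (auto simp: d_def)
    have "continuous_on {0..d} (\<lambda>y. ereal (A_series y))"
      using A_series_continuous_on[OF d(2)] by (rule continuous_on_ereal)
    then have "continuous_on {0..d} A_fun"
      by (rule continuous_on_eq) (use d in \<open>simp add: A_fun_eq_A_series\<close>)
    then have "continuous (at x within {0..d}) A_fun"
      using x d by (simp add: continuous_on_eq_continuous_within)
    moreover have "at x within {0..1} = at x within {0..d}"
      by (rule at_within_nhd[of x "{..<d}"]) (use d in auto)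
    ultimately show ?thesis by simp
  qed
qed

lemma A_fun_image: "A_fun ` {0..1} = {ereal (pi / 2)..}"
proof
  show "A_fun ` {0..1} \<subseteq> {ereal (pi / 2)..}"
  proof (rule image_subsetI)
    fix y :: real
    assume "y \<in> {0..1}"
    then have "A_fun 0 \<le> A_fun y"
      by (intro strict_mono_on_leD[OF A_fun_strict_mono_on]) auto
    then show "A_fun y \<in> {ereal (pi / 2)..}"
      by (simp add: A_fun_zero)
  qed
  show "{ereal (pi / 2)..} \<subseteq> A_fun ` {0..1}"
  proof
    fix W assume W: "W \<in> {ereal (pi / 2)..}"
    have "connected (A_fun ` {0..1})"
      by (intro connected_continuous_image A_fun_continuous_on) simp
    moreover have "ereal (pi / 2) \<in> A_fun ` {0..1}"
      using A_fun_zero by (rule image_eqI[where x = 0, OF sym]) simp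
    moreover have "\<infinity> \<in> A_fun ` {0..1}"
      using A_fun_one by (rule image_eqI[where x = 1, OF sym]) simp
    ultimately show "W \<in> A_fun ` {0..1}"
      by (rule connectedD_interval) (use W in auto)
  qed
qed

lemma A_fun_A_inv:
  assumes "W \<ge> ereal (pi / 2)"
  shows "A_inv W \<in> {0..1}" "A_fun (A_inv W) = W"
proof -
  have "W \<in> A_fun ` {0..1}"
    using assms by (simp add: A_fun_image)
  then obtain c where c: "c \<in> {0..1}" "A_fun c = W"
    by blast
  then have "A_inv W = c"
    unfolding A_inv_def using the_inv_into_f_f[OF A_fun_inj_on] by blast
  then show "A_inv W \<in> {0..1}" "A_fun (A_inv W) = W"
    using c by simp_all
qed

lemma tendsto_A_fun_iff:
  assumes y: "eventually (\<lambda>j. y j \<in> {0..1}) F" and W: "W \<ge> ereal (pi / 2)"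
  shows "((\<lambda>j. A_fun (y j)) \<longlongrightarrow> W) F \<longleftrightarrow> (y \<longlongrightarrow> A_inv W) F"
proof
  assume "(y \<longlongrightarrow> A_inv W) F"
  from continuous_on_tendsto_compose[OF A_fun_continuous_on this A_fun_A_inv(1)[OF W] y]
  show "((\<lambda>j. A_fun (y j)) \<longlongrightarrow> W) F"
    using A_fun_A_inv(2)[OF W] by simp
next
  assume lim: "((\<lambda>j. A_fun (y j)) \<longlongrightarrow> W) F"
  have "continuous_on (A_fun ` {0..1}) A_inv"
    unfolding A_inv_def
    by (rule continuous_on_inv[OF A_fun_continuous_on]) (auto simp: the_inv_into_f_f[OF A_fun_inj_on])
  moreover have "eventually (\<lambda>j. A_fun (y j) \<in> A_fun ` {0..1}) F"
    using y by (rule eventually_mono) simp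
  ultimately have "((\<lambda>j. A_inv (A_fun (y j))) \<longlongrightarrow> A_inv W) F"
    using lim W A_fun_image by (elim continuous_on_tendsto_compose) auto
  moreover have "eventually (\<lambda>j. A_inv (A_fun (y j)) = y j) F"
    using y by eventually_elim (rule the_inv_into_f_f[OF A_fun_inj_on, folded A_inv_def])
  ultimately show "(y \<longlongrightarrow> A_inv W) F"
    by (rule Lim_transform_eventually)
qed

lemma tendsto_ereal_A_series_iff:
  assumes F: "F \<noteq> bot" and y: "eventually (\<lambda>j. 0 \<le> y j \<and> y j < 1) F"
  shows "((\<lambda>j. ereal (A_series (y j))) \<longlongrightarrow> W) F \<longleftrightarrow> W \<ge> ereal (pi / 2) \<and> (y \<longlongrightarrow> A_inv W) F"
proof -
  have "eventually (\<lambda>j. ereal (A_series (y j)) = A_fun (y j)) F"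
    using y by (rule eventually_mono) (simp add: A_fun_eq_A_series)
  then have "((\<lambda>j. ereal (A_series (y j))) \<longlongrightarrow> W) F \<longleftrightarrow> ((\<lambda>j. A_fun (y j)) \<longlongrightarrow> W) F"
    by (rule tendsto_cong)
  moreover have "eventually (\<lambda>j. pi / 2 \<le> A_series (y j)) F"
    using y by (rule eventually_mono) (blast intro: A_series_ge_pi_half)
  then have "W \<ge> ereal (pi / 2)" if "((\<lambda>j. ereal (A_series (y j))) \<longlongrightarrow> W) F"
    using that F by (intro tendsto_lowerbound) (auto elim: eventually_mono)
  moreover have "eventually (\<lambda>j. y j \<in> {0..1}) F"
    using y by (rule eventually_mono) simp
  ultimately show ?thesis
    using tendsto_A_fun_iff by blast
qed

section \<open>Asymptotics of \<open>D\<^sub>n(x) / n\<close>\<close>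

definition alt_harm :: "real \<Rightarrow> real" where
  "alt_harm u = (\<Sum>m. (-1) ^ m / (u + real m))"

lemma alt_harm_Leibniz:
  assumes "0 < u"
  shows "(\<lambda>m. (-1) ^ m / (u + real m)) sums alt_harm u" "0 \<le> alt_harm u" "alt_harm u \<le> 1 / u"
proof -
  have "(\<lambda>m. 1 / (u + real m)) \<longlonglongrightarrow> 0"
    by real_asymp
  moreover have "0 \<le> 1 / (u + real m)" "1 / (u + real (Suc m)) \<le> 1 / (u + real m)" for m
    using assms by (auto intro: divide_left_mono)
  ultimately have Leibniz:
      "summable (\<lambda>m. (-1) ^ m * (1 / (u + real m)))"
      "0 \<le> (\<Sum>m. (-1) ^ m * (1 / (u + real m)))"
      "(\<Sum>m. (-1) ^ m * (1 / (u + real m))) \<le> 1 / u"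
    using summable_Leibniz'(1)[of "\<lambda>m. 1 / (u + real m)"]
      summable_Leibniz'(2,4)[of "\<lambda>m. 1 / (u + real m)" 0] by auto
  show "(\<lambda>m. (-1) ^ m / (u + real m)) sums alt_harm u"
    using Leibniz(1) by (simp add: alt_harm_def summable_sums)
  show "0 \<le> alt_harm u" "alt_harm u \<le> 1 / u"
    using Leibniz(2,3) by (simp_all add: alt_harm_def)
qed

lemma alt_harm_split:
  assumes "0 < u"
  shows "alt_harm u = (\<Sum>m<N. (-1) ^ m / (u + real m)) + (-1) ^ N * alt_harm (u + real N)"
proof -
  have "(\<lambda>m. (-1) ^ m / (u + real N + real m)) sums alt_harm (u + real N)"
    using assms by (intro alt_harm_Leibniz) simp
  then have "(\<lambda>m. (-1) ^ N * ((-1) ^ m / (u + real N + real m))) sums ((-1) ^ N * alt_harm (u + real N))"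
    by (rule sums_mult)
  then have "(\<lambda>m. (-1) ^ (m + N) / (u + real (m + N))) sums ((-1) ^ N * alt_harm (u + real N))"
    by (simp add: power_add mult_ac add_ac)
  moreover have "summable (\<lambda>m. (-1) ^ m / (u + real m))"
    using alt_harm_Leibniz(1)[OF assms] by (rule sums_summable)
  ultimately show ?thesis
    unfolding alt_harm_def by (simp add: suminf_split_initial_segment[of _ N] sums_iff add.commute)
qed

lemma alt_harm_partial_sum_error:
  assumes "0 < u"
  shows "\<bar>alt_harm u - (\<Sum>m<N. (-1) ^ m / (u + real m))\<bar> \<le> 1 / (u + real N)"
proof -
  have "0 < u + real N" using assms by simp
  then have "\<bar>(-1) ^ N * alt_harm (u + real N)\<bar> \<le> 1 / (u + real N)"
    using alt_harm_Leibniz(2,3) by (simp add: abs_mult)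
  then show ?thesis
    using alt_harm_split[OF assms, of N] by simp
qed

text \<open>The two tails of \<open>D\<^sub>n\<close> combine into \<open>A\<close> through the partial fractions
  \<open>1 / (f + m) + 1 / (1 - f + m) = 4 (2m + 1) / ((2m + 1)\<^sup>2 - (2f - 1)\<^sup>2)\<close>.\<close>
lemma alt_harm_reflection:
  assumes "\<bar>r\<bar> < 1"
  shows "alt_harm ((1 + r) / 2) + alt_harm ((1 - r) / 2) = 2 * A_series (r\<^sup>2)"
proof -
  have summand: "(-1) ^ m / ((1 + r) / 2 + real m) + (-1) ^ m / ((1 - r) / 2 + real m) = 2 * ((-1) ^ m * A_term m (r\<^sup>2))"
    for m
  proof -
    have "0 < (1 + r) / 2 + real m" "0 < (1 - r) / 2 + real m"
      using assms by (auto simp: abs_less_iff intro!: add_pos_nonneg)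
    then show ?thesis
      by (simp add: A_term_def field_simps power2_eq_square)
  qed
  have "(\<lambda>m. 2 * ((-1) ^ m * A_term m (r\<^sup>2))) sums (alt_harm ((1 + r) / 2) + alt_harm ((1 - r) / 2))"
    unfolding summand[symmetric] using assms by (intro sums_add alt_harm_Leibniz) auto
  moreover have "(\<lambda>m. 2 * ((-1) ^ m * A_term m (r\<^sup>2))) sums (2 * A_series (r\<^sup>2))"
    using assms by (intro sums_mult A_series_sums) (auto simp: abs_square_less_1)
  ultimately show ?thesis
    using sums_unique2 by blast
qed

lemma of_nat_iota: "-1 \<le> x \<Longrightarrow> real (iota n x) = of_int \<lfloor>real n * (x + 1) / 2\<rfloor>"
  unfolding iota_def by simp

lemma iota_le: "-1 \<le> x \<Longrightarrow> x \<le> 1 \<Longrightarrow> iota n x \<le> n"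
proof -
  assume x: "-1 \<le> x" "x \<le> 1"
  then have "real n * (x + 1) \<le> real n * 2"
    by (intro mult_left_mono) auto
  then have "real (iota n x) \<le> real n"
    using of_nat_iota[OF x(1), of n] by linarith
  then show ?thesis by simp
qed

lemma rho_eq: "0 < n \<Longrightarrow> rho n x = 2 * (real n * (x + 1) / 2 - real (iota n x)) - 1"
  unfolding rho_def node_def by (simp add: field_simps)

lemma abs_rho_less_one:
  assumes "0 < n" "-1 \<le> x" "x \<noteq> node (iota n x) n"
  shows "\<bar>rho n x\<bar> < 1"
proof -
  define t where "t = real n * (x + 1) / 2"
  have "real (iota n x) = of_int \<lfloor>t\<rfloor>"
    using of_nat_iota[OF assms(2)] by (simp add: t_def)
  moreover have "t \<noteq> real (iota n x)"
    using assms(1,3) by (auto simp: t_def node_def field_simps)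
  ultimately have "0 < t - real (iota n x)" "t - real (iota n x) < 1"
    by linarith+
  then show ?thesis
    using rho_eq[OF assms(1)] by (simp add: t_def abs_less_iff)
qed

text \<open>Here \<open>f\<close> is the offset of \<open>x\<close> from the node \<open>x\<^sub>i\<close> in units of the node spacing \<open>2 / n\<close>;
  the two sums collect the nodes to the left and to the right of \<open>x\<close>.\<close>
lemma Dn_div_eq_partial_sums:
  fixes n i :: nat and x f :: real
  assumes n: "0 < n" and i: "i \<le> n" and f: "real n * (x + 1) / 2 = real i + f" "0 < f" "f < 1"
  shows "Dn n x / real n = (-1) ^ i / 2 *
    ((\<Sum>m<i + 1. (-1) ^ m / (f + real m)) + (\<Sum>m<n - i. (-1) ^ m / (1 - f + real m)))"
proof -
  define g where "g k = (-1) ^ k / (2 * (real i + f - real k))" for k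
  have "(-1) ^ k / (x - node k n) / real n = g k" for k
  proof -
    have "(x - node k n) * real n = 2 * (real i + f - real k)"
      using n f(1) unfolding node_def by (simp add: field_simps)
    then show ?thesis
      unfolding g_def by (simp add: divide_divide_eq_left)
  qed
  then have "Dn n x / real n = (\<Sum>k<n + 1. g k)"
    unfolding Dn_def sum_divide_distrib by (simp add: atLeast0AtMost lessThan_Suc_atMost)
  also have "\<dots> = (\<Sum>k<i + 1. g k) + (\<Sum>k\<in>{i + 1..<n + 1}. g k)"
    using sum.atLeastLessThan_concat[of 0 "i + 1" "n + 1" g] i by (simp add: atLeast0LessThan)
  also have "(\<Sum>k<i + 1. g k) = (\<Sum>m<i + 1. g (i + 1 - Suc m))"
    by (rule sum.nat_diff_reindex[symmetric])
  also have "\<dots> = (\<Sum>m<i + 1. (-1) ^ i / 2 * ((-1) ^ m / (f + real m)))"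
  proof (rule sum.cong[OF refl])
    fix m assume "m \<in> {..<i + 1}"
    then have m: "m \<le> i" by simp
    have "(-1::real) ^ (i - m) = (-1) ^ i * (-1) ^ m"
      using m by (auto simp: le_iff_add power_add)
    then show "g (i + 1 - Suc m) = (-1) ^ i / 2 * ((-1) ^ m / (f + real m))"
      using m unfolding g_def by (simp add: of_nat_diff)
  qed
  also have "(\<Sum>k\<in>{i + 1..<n + 1}. g k) = (\<Sum>m<n - i. g (m + (i + 1)))"
    using sum.shift_bounds_nat_ivl[of g 0 "i + 1" "n - i"] i by (simp add: atLeast0LessThan)
  also have "\<dots> = (\<Sum>m<n - i. (-1) ^ i / 2 * ((-1) ^ m / (1 - f + real m)))"
  proof (rule sum.cong[OF refl])
    fix m
    have "0 < 1 - f + real m" using f by simp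
    then show "g (m + (i + 1)) = (-1) ^ i / 2 * ((-1) ^ m / (1 - f + real m))"
      unfolding g_def by (simp add: power_add field_simps)
  qed
  finally show ?thesis
    by (simp only: sum_distrib_left distrib_left)
qed

lemma Dn_div_approx_alt_harm:
  fixes n i :: nat and x f :: real
  assumes n: "0 < n" and i: "i \<le> n" and f: "real n * (x + 1) / 2 = real i + f" "0 < f" "f < 1"
  shows "\<bar>Dn n x / real n - (-1) ^ i / 2 * (alt_harm f + alt_harm (1 - f))\<bar>
    \<le> (1 / (f + real (i + 1)) + 1 / (1 - f + real (n - i))) / 2"
proof -
  define SL where "SL = (\<Sum>m<i + 1. (-1) ^ m / (f + real m))"
  define SR where "SR = (\<Sum>m<n - i. (-1) ^ m / (1 - f + real m))"
  have "Dn n x / real n - (-1) ^ i / 2 * (alt_harm f + alt_harm (1 - f))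
      = (-1) ^ i / 2 * ((SL - alt_harm f) + (SR - alt_harm (1 - f)))"
    unfolding Dn_div_eq_partial_sums[OF assms] SL_def SR_def by (simp add: algebra_simps)
  then have "\<bar>Dn n x / real n - (-1) ^ i / 2 * (alt_harm f + alt_harm (1 - f))\<bar>
      = \<bar>(-1) ^ i / 2\<bar> * \<bar>(SL - alt_harm f) + (SR - alt_harm (1 - f))\<bar>"
    by (simp only: abs_mult)
  also have "\<dots> \<le> (\<bar>alt_harm f - SL\<bar> + \<bar>alt_harm (1 - f) - SR\<bar>) / 2"
    using abs_triangle_ineq[of "SL - alt_harm f" "SR - alt_harm (1 - f)"]
    by (simp add: power_abs abs_minus_commute)
  also have "\<dots> \<le> (1 / (f + real (i + 1)) + 1 / (1 - f + real (n - i))) / 2"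
    unfolding SL_def SR_def using f by (intro divide_right_mono add_mono alt_harm_partial_sum_error) auto
  finally show ?thesis .
qed

lemma Dn_approx_A_series:
  assumes n: "0 < n" and x: "-1 < x" "x < 1" and regular: "\<forall>k\<le>n. x \<noteq> node k n"
  shows "\<bar>rho n x\<bar> < 1"
    and "\<bar>Dn n x / real n - (-1) ^ iota n x * A_series ((rho n x)\<^sup>2)\<bar> \<le> (1 / (x + 1) + 1 / (1 - x)) / real n"
proof -
  define i where "i = iota n x"
  define r where "r = rho n x"
  define f where "f = (1 + r) / 2"
  have i: "i \<le> n"
    unfolding i_def using x by (intro iota_le) auto
  show r: "\<bar>rho n x\<bar> < 1"
    using n x regular i by (intro abs_rho_less_one) (auto simp: i_def)
  have f: "real n * (x + 1) / 2 = real i + f" "0 < f" "f < 1" "1 - f = (1 - r) / 2"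
    using rho_eq[OF n, of x] r by (auto simp: f_def r_def i_def abs_less_iff field_simps)
  have A: "(-1) ^ i * A_series (r\<^sup>2) = (-1) ^ i / 2 * (alt_harm f + alt_harm (1 - f))"
    using alt_harm_reflection[of r] r unfolding f(4) by (simp add: f_def r_def)
  have "\<bar>Dn n x / real n - (-1) ^ i * A_series (r\<^sup>2)\<bar>
      \<le> (1 / (f + real (i + 1)) + 1 / (1 - f + real (n - i))) / 2"
    using Dn_div_approx_alt_harm[OF n i f(1-3), folded A] .
  also have "\<dots> \<le> (2 / (real n * (x + 1)) + 2 / (real n * (1 - x))) / 2"
  proof -
    have "real n * (x + 1) / 2 \<le> f + real (i + 1)"
      "real n * (1 - x) / 2 \<le> 1 - f + real (n - i)"
      using f(1) i by (auto simp: of_nat_diff field_simps)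
    moreover have "0 < real n * (x + 1) / 2" "0 < real n * (1 - x) / 2"
      using n x by auto
    ultimately have "1 / (f + real (i + 1)) \<le> 1 / (real n * (x + 1) / 2)"
      "1 / (1 - f + real (n - i)) \<le> 1 / (real n * (1 - x) / 2)"
      by (intro divide_left_mono mult_pos_pos; linarith)+
    then show ?thesis
      by simp
  qed
  also have "\<dots> = (1 / (x + 1) + 1 / (1 - x)) / real n"
    by (simp add: add_divide_distrib divide_divide_eq_left mult.commute)
  finally show "\<bar>Dn n x / real n - (-1) ^ iota n x * A_series ((rho n x)\<^sup>2)\<bar>
      \<le> (1 / (x + 1) + 1 / (1 - x)) / real n"
    by (simp add: i_def r_def)
qed

lemma regular_for_eventually:
  assumes "strict_mono nj" "regular_for nj x"
  shows "eventually (\<lambda>j. 0 < nj j \<and> (\<forall>k\<le>nj j. x \<noteq> node k (nj j))) sequentially"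
proof -
  obtain j0 where j0: "\<And>j. j \<ge> j0 \<Longrightarrow> \<forall>k\<le>nj j. x \<noteq> node k (nj j)"
    using assms(2) unfolding regular_for_def by blast
  have "\<And>j. j \<ge> 1 \<Longrightarrow> 0 < nj j"
    using seq_suble[OF assms(1)] by (metis le_trans less_one not_le)
  with j0 show ?thesis
    by (intro eventually_mono[OF eventually_ge_at_top[of "max j0 1"]]) simp
qed

lemma regular_for_interior:
  assumes "strict_mono nj" "x \<in> {-1..1}" "regular_for nj x"
  shows "-1 < x" "x < 1"
proof -
  obtain j where "0 < nj j" "\<forall>k\<le>nj j. x \<noteq> node k (nj j)"
    using eventually_happens'[OF _ regular_for_eventually[OF assms(1,3)]] by auto
  then have "x \<noteq> node 0 (nj j)" "x \<noteq> node (nj j) (nj j)"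
    by auto
  then show "-1 < x" "x < 1"
    using assms(2) \<open>0 < nj j\<close> by (auto simp: node_def)
qed

lemma Dn_approx_A_series_tendsto_zero:
  assumes x: "-1 < x" "x < 1"
    and n: "filterlim n at_top F"
    and regular: "eventually (\<lambda>j. 0 < n j \<and> (\<forall>k\<le>n j. x \<noteq> node k (n j))) F"
  shows "((\<lambda>j. Dn (n j) x / real (n j) - (-1) ^ iota (n j) x * A_series ((rho (n j) x)\<^sup>2)) \<longlongrightarrow> 0) F"
proof (rule Lim_null_comparison)
  show "eventually (\<lambda>j. norm (Dn (n j) x / real (n j) - (-1) ^ iota (n j) x * A_series ((rho (n j) x)\<^sup>2))
      \<le> (1 / (x + 1) + 1 / (1 - x)) / real (n j)) F"
    using regular by (rule eventually_mono) (use Dn_approx_A_series(2) x in auto)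
  have "filterlim (\<lambda>j. real (n j)) at_top F"
    using filterlim_compose[OF filterlim_real_sequentially n] .
  then show "((\<lambda>j. (1 / (x + 1) + 1 / (1 - x)) / real (n j)) \<longlongrightarrow> 0) F"
    by (intro tendsto_divide_0[OF tendsto_const] filterlim_at_top_imp_at_infinity)
qed

section \<open>Signed sequences in the extended reals\<close>

lemma tendsto_ereal_add_null_iff:
  fixes u e :: "'a \<Rightarrow> real"
  assumes "(e \<longlongrightarrow> 0) F"
  shows "((\<lambda>j. ereal (u j + e j)) \<longlongrightarrow> L) F \<longleftrightarrow> ((\<lambda>j. ereal (u j)) \<longlongrightarrow> L) F"
proof -
  have "((\<lambda>j. ereal (v j + w j)) \<longlongrightarrow> L) F"
    if "((\<lambda>j. ereal (v j)) \<longlongrightarrow> L) F" "(w \<longlongrightarrow> 0) F" for v w :: "'a \<Rightarrow> real"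
    using tendsto_add_ereal_general[of L 0 "\<lambda>j. ereal (v j)" F "\<lambda>j. ereal (w j)"] that
    by (simp add: zero_ereal_def)
  from this[of u e] this[of "\<lambda>j. u j + e j" "\<lambda>j. - e j"] assms show ?thesis
    using tendsto_minus[OF assms] by auto
qed

lemma neg_one_power_cases: "(-1::real) ^ k = 1 \<or> (-1::real) ^ k = -1"
  by (cases "even k") auto

lemma tendsto_sign_seq_iff:
  fixes s :: "'a \<Rightarrow> real"
  assumes s: "\<And>j. s j = 1 \<or> s j = -1" and \<sigma>: "\<sigma> = 1 \<or> \<sigma> = -1"
  shows "(s \<longlongrightarrow> \<sigma>) F \<longleftrightarrow> eventually (\<lambda>j. s j = \<sigma>) F"
proof
  assume "(s \<longlongrightarrow> \<sigma>) F"
  from tendstoD[OF this zero_less_one] show "eventually (\<lambda>j. s j = \<sigma>) F"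
  proof (rule eventually_mono)
    fix j
    show "dist (s j) \<sigma> < 1 \<Longrightarrow> s j = \<sigma>"
      using s[of j] \<sigma> by (auto simp: dist_real_def)
  qed
qed (rule tendsto_eventually)

lemma esign_cases: "L \<noteq> 0 \<Longrightarrow> esign L = 1 \<and> L > 0 \<or> esign L = -1 \<and> L < 0"
  unfolding esign_def by auto

lemma eventually_sign_eq_esign:
  fixes s a :: "'a \<Rightarrow> real"
  assumes s: "\<And>j. s j = 1 \<or> s j = -1" and a: "eventually (\<lambda>j. 0 < a j) F"
    and lim: "((\<lambda>j. ereal (s j * a j)) \<longlongrightarrow> L) F" and L: "L \<noteq> 0"
  shows "eventually (\<lambda>j. s j = esign L) F"
  using esign_cases[OF L]
proof (elim disjE conjE)
  assume "esign L = 1" "0 < L"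
  from order_tendstoD(1)[OF lim \<open>0 < L\<close>] a show ?thesis
  proof eventually_elim
    case (elim j)
    then show ?case using s[of j] \<open>esign L = 1\<close> by (auto simp: zero_less_mult_iff)
  qed
next
  assume "esign L = -1" "L < 0"
  from order_tendstoD(2)[OF lim \<open>L < 0\<close>] a show ?thesis
  proof eventually_elim
    case (elim j)
    then show ?case using s[of j] \<open>esign L = -1\<close> by (auto simp: mult_less_0_iff)
  qed
qed

lemma tendsto_esign_mult_abs:
  fixes a :: "'a \<Rightarrow> real"
  assumes "((\<lambda>j. ereal (a j)) \<longlongrightarrow> \<bar>L\<bar>) F" "L \<noteq> 0"
  shows "((\<lambda>j. ereal (esign L) * ereal (a j)) \<longlongrightarrow> L) F"
  using esign_cases[OF assms(2)]
proof (elim disjE conjE)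
  assume "esign L = 1" "0 < L"
  then show ?thesis using assms(1) by simp
next
  assume "esign L = -1" "L < 0"
  then show ?thesis
    using tendsto_uminus_ereal[OF assms(1)] by (cases L) (auto simp: ereal_uminus_eq_reorder)
qed

lemma tendsto_ereal_sign_mult_iff:
  fixes s a :: "'a \<Rightarrow> real"
  assumes F: "F \<noteq> bot"
    and s: "\<And>j. s j = 1 \<or> s j = -1"
    and a: "eventually (\<lambda>j. c \<le> a j) F" "0 < c"
  shows "((\<lambda>j. ereal (s j * a j)) \<longlongrightarrow> L) F \<longleftrightarrow>
    (s \<longlongrightarrow> esign L) F \<and> ((\<lambda>j. ereal (a j)) \<longlongrightarrow> \<bar>L\<bar>) F"
proof -
  have a_pos: "eventually (\<lambda>j. 0 < a j) F"
    using a by (auto elim: eventually_mono)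
  have L_nonzero: "L \<noteq> 0" if "((\<lambda>j. ereal (a j)) \<longlongrightarrow> \<bar>L\<bar>) F"
  proof -
    have "ereal c \<le> \<bar>L\<bar>"
      using that a(1) F by (intro tendsto_lowerbound) (auto elim: eventually_mono)
    then show ?thesis
      using a(2) by auto
  qed
  show ?thesis
  proof
    assume lim: "((\<lambda>j. ereal (s j * a j)) \<longlongrightarrow> L) F"
    have "eventually (\<lambda>j. \<bar>ereal (s j * a j)\<bar> = ereal (a j)) F"
    proof (rule eventually_mono[OF a_pos])
      fix j
      show "0 < a j \<Longrightarrow> \<bar>ereal (s j * a j)\<bar> = ereal (a j)"
        using s[of j] by auto
    qed
    with tendsto_abs_ereal[OF lim] have moduli: "((\<lambda>j. ereal (a j)) \<longlongrightarrow> \<bar>L\<bar>) F"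
      by (rule Lim_transform_eventually)
    with eventually_sign_eq_esign[OF s a_pos lim L_nonzero]
    show "(s \<longlongrightarrow> esign L) F \<and> ((\<lambda>j. ereal (a j)) \<longlongrightarrow> \<bar>L\<bar>) F"
      by (auto intro: tendsto_eventually)
  next
    assume "(s \<longlongrightarrow> esign L) F \<and> ((\<lambda>j. ereal (a j)) \<longlongrightarrow> \<bar>L\<bar>) F"
    then have signs: "(s \<longlongrightarrow> esign L) F" and moduli: "((\<lambda>j. ereal (a j)) \<longlongrightarrow> \<bar>L\<bar>) F"
      by auto
    have L: "L \<noteq> 0"
      using L_nonzero[OF moduli] .
    then have "eventually (\<lambda>j. s j = esign L) F"
      using signs tendsto_sign_seq_iff[of s "esign L" F, OF s] esign_cases by blast
    then have "eventually (\<lambda>j. ereal (esign L) * ereal (a j) = ereal (s j * a j)) F"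
      by (rule eventually_mono) simp
    with tendsto_esign_mult_abs[OF moduli L] show "((\<lambda>j. ereal (s j * a j)) \<longlongrightarrow> L) F"
      by (rule Lim_transform_eventually)
  qed
qed

theorem corollary2:
  fixes nj :: "nat \<Rightarrow> nat" and x :: real and L :: ereal
  assumes "strict_mono nj"
    and "x \<in> {-1..1}"
    and "regular_for nj x"
  shows "((\<lambda>j. ereal (Dn (nj j) x / real (nj j))) \<longlonglongrightarrow> L) \<longleftrightarrow>
         (((\<lambda>j. (-1::real) ^ iota (nj j) x) \<longlonglongrightarrow> esign L)
          \<and> \<bar>L\<bar> \<ge> ereal (pi / 2)
          \<and> ((\<lambda>j. (rho (nj j) x)\<^sup>2) \<longlonglongrightarrow> A_inv \<bar>L\<bar>))"
proof -
  define s where "s j = (-1::real) ^ iota (nj j) x" for j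
  define y where "y j = (rho (nj j) x)\<^sup>2" for j
  have x: "-1 < x" "x < 1"
    using regular_for_interior[OF assms] by auto
  have regular: "eventually (\<lambda>j. 0 < nj j \<and> (\<forall>k\<le>nj j. x \<noteq> node k (nj j))) sequentially"
    using regular_for_eventually[OF assms(1,3)] .
  have y: "eventually (\<lambda>j. 0 \<le> y j \<and> y j < 1) sequentially"
    using regular by (rule eventually_mono) (use x Dn_approx_A_series(1) in \<open>auto simp: y_def abs_square_less_1\<close>)
  have moduli: "eventually (\<lambda>j. pi / 2 \<le> A_series (y j)) sequentially"
    using y by (rule eventually_mono) (blast intro: A_series_ge_pi_half)
  have error: "((\<lambda>j. Dn (nj j) x / real (nj j) - s j * A_series (y j)) \<longlongrightarrow> 0) sequentially"
    unfolding s_def y_def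
    using x filterlim_subseq[OF assms(1)] regular by (rule Dn_approx_A_series_tendsto_zero)
  have "((\<lambda>j. ereal (Dn (nj j) x / real (nj j))) \<longlonglongrightarrow> L)
      \<longleftrightarrow> ((\<lambda>j. ereal (s j * A_series (y j))) \<longlonglongrightarrow> L)"
    using tendsto_ereal_add_null_iff[OF error, of "\<lambda>j. s j * A_series (y j)"] by simp
  also have "\<dots> \<longleftrightarrow> (s \<longlonglongrightarrow> esign L) \<and> ((\<lambda>j. ereal (A_series (y j))) \<longlonglongrightarrow> \<bar>L\<bar>)"
    using moduli by (intro tendsto_ereal_sign_mult_iff[where c = "pi / 2"]) (auto simp: s_def neg_one_power_cases)
  also have "\<dots> \<longleftrightarrow> (s \<longlonglongrightarrow> esign L) \<and> \<bar>L\<bar> \<ge> ereal (pi / 2) \<and> (y \<longlonglongrightarrow> A_inv \<bar>L\<bar>)"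
    using tendsto_ereal_A_series_iff[OF _ y] by simp
  finally show ?thesis
    unfolding s_def[abs_def] y_def[abs_def] by simp
qed

end
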